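(* Let $m\in\mathbb{N}$, $\varphi_k\in(0,\pi)$ and $c_k,d_k\geq0$ for $k=1,\dots,m$, and set $\alpha_k=e^{i\varphi_k}$. If $\cos\varphi_1,\dots,\cos\varphi_m$ are algebraically independent over $\mathbb{Q}$, then the Lévy measure $\sum_{k=1}^m(c_k\delta_{\alpha_k}+d_k\delta_{\bar\alpha_k})$ is L-unique.
   Context: A Lévy measure on $\mathbb{T}$ is a positive Borel measure $\rho$ with $\rho(\{1\})=0$ and $1-\Re s\in L^1(\rho)$. For a Lévy measure $\rho$, $\nu_\circledast^{(1,0,\rho)}$ is the probability measure on $\mathbb{T}$ with $\int s^n\,d\nu=\exp\big(\int_{\mathbb{T}}(s^n-1-in\Im s)\,d\rho(s)\big)$, $n\in\mathbb{Z}$. $\rho$ is L-unique if the only Lévy measure $\widetilde\rho$ with $\nu_\circledast^{(1,0,\widetilde\rho)}=\nu_\circledast^{(1,0,\rho)}$ is $\widetilde\rho=\rho$. *)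

theory Defs
  imports "HOL-Analysis.Analysis"
begin

definition circleT :: "complex set" where
  "circleT = sphere 0 1"

definition borelT :: "complex measure" where
  "borelT = restrict_space borel circleT"

definition levy_measure :: "complex measure \<Rightarrow> bool" where
  "levy_measure \<rho> \<longleftrightarrow> sets \<rho> = sets borelT \<and> emeasure \<rho> {1} = 0
     \<and> integrable \<rho> (\<lambda>s. 1 - Re s)"

text \<open>n-th Fourier coefficient of the probability measure nu^(1,0,rho).\<close>
definition levy_coeff :: "complex measure \<Rightarrow> int \<Rightarrow> complex" where
  "levy_coeff \<rho> n = exp (\<integral>s. (s powi n - 1 - \<i> * of_int n * of_real (Im s)) \<partial>\<rho>)"

definition L_unique :: "complex measure \<Rightarrow> bool" where
  "L_unique \<rho> \<longleftrightarrow> (\<forall>\<rho>'. levy_measure \<rho>' \<and> (\<forall>n. levy_coeff \<rho>' n = levy_coeff \<rho> n)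
                      \<longrightarrow> \<rho>' = \<rho>)"

definition alg_indep_rat :: "nat \<Rightarrow> (nat \<Rightarrow> real) \<Rightarrow> bool" where
  "alg_indep_rat m x \<longleftrightarrow>
     (\<forall>(S :: (nat \<Rightarrow> nat) set) (a :: (nat \<Rightarrow> nat) \<Rightarrow> rat).
        finite S \<and> (\<forall>e\<in>S. \<forall>k. k \<notin> {1..m} \<longrightarrow> e k = 0)
        \<and> (\<Sum>e\<in>S. of_rat (a e) * (\<Prod>k\<in>{1..m}. x k ^ e k)) = 0
        \<longrightarrow> (\<forall>e\<in>S. a e = 0))"

definition discrete_levy ::
  "nat \<Rightarrow> (nat \<Rightarrow> complex) \<Rightarrow> (nat \<Rightarrow> real) \<Rightarrow> (nat \<Rightarrow> real) \<Rightarrow> complex measure" where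
  "discrete_levy m \<alpha> c d = measure_of circleT (sets borelT)
     (\<lambda>A. \<Sum>k\<in>{1..m}. ennreal (c k) * indicator A (\<alpha> k) + ennreal (d k) * indicator A (cnj (\<alpha> k)))"

end

theory Submission
  imports Defs "HOL-Computational_Algebra.Polynomial"
begin

(*
  Let rho' be a Levy measure with the same Fourier coefficients as rho. Equal moduli of the
  coefficients give equal integrals of Re (s^n) - 1, hence of p (Re s) for every real polynomial p
  with p 1 = 0. For p x = (1 - x) prod_k (x - cos phi_k)^2, which is nonnegative on [-1, 1] and
  vanishes rho-almost everywhere, this shows that rho' also lives on the points alpha_k, conj alpha_k.
  Equal arguments of the coefficients then mean that, after a second difference in n, the
  exponential sums sum_a w a * a^n with w a = (rho' {a} - rho {a}) * (a - 1)^2 take values in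
  2 pi i Z. They satisfy the linear recurrence with characteristic polynomial
  prod_k (z^2 + 1 - 2 cos phi_k z); expanding it in the cos phi_k, algebraic independence forces
  the integer sequence to vanish from n = m on, and then w = 0 because the points are distinct.
*)

section \<open>Measures with finite support\<close>

lemma emeasure_finite_support:
  assumes "finite F" "AE x in M. x \<in> F" "\<And>a. a \<in> F \<Longrightarrow> {a} \<in> sets M" "A \<in> sets M"
  shows "emeasure M A = (\<Sum>a\<in>F. emeasure M {a} * indicator A a)"
proof -
  have AF: "A \<inter> F \<in> sets M"
    by (rule sets.countable) (use assms(1,3) in \<open>auto intro: countable_finite\<close>)
  have "emeasure M A = emeasure M (A \<inter> F)"
    using assms(2) by (intro emeasure_eq_AE assms(4) AF) auto
  also have "\<dots> = (\<Sum>a\<in>A \<inter> F. emeasure M {a})"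
    using assms(1,3) by (intro emeasure_eq_sum_singleton) auto
  also have "\<dots> = (\<Sum>a\<in>F. emeasure M {a} * indicator A a)"
    using assms(1) by (simp add: sum.inter_restrict Int_commute indicator_def if_distrib)
  finally show ?thesis .
qed

lemma measure_eq_finite_support:
  assumes "sets M = sets N" "finite F" "AE x in M. x \<in> F" "AE x in N. x \<in> F"
    and "\<And>a. a \<in> F \<Longrightarrow> {a} \<in> sets M" "\<And>a. a \<in> F \<Longrightarrow> emeasure M {a} = emeasure N {a}"
  shows "M = N"
proof (rule measure_eqI)
  fix A assume A: "A \<in> sets M"
  then have "A \<in> sets N" "\<And>a. a \<in> F \<Longrightarrow> {a} \<in> sets N"
    using assms(1,5) by simp_all
  then show "emeasure M A = emeasure N A"
    using assms A by (simp add: emeasure_finite_support[of F M A] emeasure_finite_support[of F N A])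
qed fact

lemma has_bochner_integral_finite_support:
  fixes f :: "_ \<Rightarrow> 'b::{banach, second_countable_topology}"
  assumes "finite F" "AE x in M. x \<in> F" "\<And>a. a \<in> F \<Longrightarrow> {a} \<in> sets M"
    and "\<And>a. a \<in> F \<Longrightarrow> emeasure M {a} < \<infinity>" "f \<in> borel_measurable M"
  shows "has_bochner_integral M f (\<Sum>a\<in>F. measure M {a} *\<^sub>R f a)"
proof -
  define g where "g x = (\<Sum>a\<in>F. indicator {a} x *\<^sub>R f a)" for x
  have "g x = f x" if "x \<in> F" for x
  proof -
    have "g x = (\<Sum>a\<in>F. if a = x then f x else 0)"
      unfolding g_def by (intro sum.cong) (auto simp: indicator_def)
    then show ?thesis
      using that assms(1) by simp
  qed
  then have "AE x in M. f x = g x"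
    using assms(2) by auto
  moreover have "g \<in> borel_measurable M"
    unfolding g_def using assms(3) by measurable
  moreover have "has_bochner_integral M g (\<Sum>a\<in>F. measure M {a} *\<^sub>R f a)"
    unfolding g_def using assms(3,4)
    by (intro has_bochner_integral_sum has_bochner_integral_scaleR_left
        has_bochner_integral_real_indicator) auto
  ultimately show ?thesis
    using has_bochner_integral_cong_AE[OF assms(5)] by blast
qed

section \<open>The circle\<close>

lemma space_borelT [simp]: "space borelT = circleT"
  by (simp add: borelT_def space_restrict_space)

lemma space_eq_circleT: "sets M = sets borelT \<Longrightarrow> space M = circleT"
  by (metis sets_eq_imp_space_eq space_borelT)

lemma singleton_in_borelT: "a \<in> circleT \<Longrightarrow> {a} \<in> sets borelT"
  unfolding borelT_def sets_restrict_space by (rule image_eqI[of _ _ "{a}"]) auto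

lemma borel_measurable_borelT:
  fixes f :: "complex \<Rightarrow> 'b::topological_space"
  assumes "sets M = sets borelT" "f \<in> borel_measurable borel"
  shows "f \<in> borel_measurable M"
proof -
  have "f \<in> borel_measurable borelT"
    unfolding borelT_def by (rule measurable_restrict_space1) fact
  moreover have "(borel_measurable M :: (complex \<Rightarrow> 'b) set) = borel_measurable borelT"
    by (rule measurable_cong_sets[OF assms(1)]) simp
  ultimately show ?thesis
    by simp
qed

lemma circleT_Re_le_1: "s \<in> circleT \<Longrightarrow> Re s \<le> 1"
  using abs_Re_le_cmod[of s] by (simp add: circleT_def)

lemma circleT_Re_eq_cos:
  assumes "s \<in> circleT" "Re s = cos t"
  shows "s = cis t \<or> s = cnj (cis t)"
proof -
  have "Re s ^ 2 + Im s ^ 2 = 1"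
    using assms(1) by (simp add: circleT_def cmod_power2[symmetric])
  then have "cos t ^ 2 + Im s ^ 2 = 1"
    using assms(2) by simp
  then have "Im s ^ 2 = sin t ^ 2"
    unfolding sin_squared_eq by linarith
  then have "Im s = sin t \<or> Im s = - sin t"
    by (simp add: power2_eq_iff)
  then show ?thesis
    using assms(2) by (auto simp: complex_eq_iff)
qed

lemma circleT_Re_eq_1_iff: "s \<in> circleT \<Longrightarrow> Re s = 1 \<longleftrightarrow> s = 1"
  using circleT_Re_eq_cos[of s 0] by auto

section \<open>The L\'evy exponent\<close>

definition levy_integrand :: "nat \<Rightarrow> complex \<Rightarrow> complex" where
  "levy_integrand n s = s ^ n - 1 - \<i> * of_nat n * of_real (Im s)"

lemma borel_measurable_levy_integrand [measurable]: "levy_integrand n \<in> borel_measurable borel"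
  unfolding levy_integrand_def by measurable

lemma levy_coeff_of_nat: "levy_coeff \<rho> (int n) = exp (integral\<^sup>L \<rho> (levy_integrand n))"
  unfolding levy_coeff_def levy_integrand_def[abs_def] by simp

lemma levy_integrand_second_difference:
  "levy_integrand (n + 2) s - 2 * levy_integrand (n + 1) s + levy_integrand n s
    = s ^ n * (s - 1) ^ 2"
  by (simp add: levy_integrand_def algebra_simps power2_eq_square)

lemma norm_power_sub_one_le:
  fixes s :: complex
  assumes "norm s = 1"
  shows "norm (s ^ n - 1 - of_nat n * (s - 1)) \<le> of_nat n ^ 2 * norm (s - 1) ^ 2"
proof (induction n)
  case (Suc n)
  have "norm (s ^ Suc n - 1 - of_nat (Suc n) * (s - 1))
      = norm ((s ^ n - 1) * (s - 1) + (s ^ n - 1 - of_nat n * (s - 1)))"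
    by (simp add: algebra_simps)
  also have "\<dots> \<le> norm (s ^ n - 1 ^ n) * norm (s - 1) + of_nat n ^ 2 * norm (s - 1) ^ 2"
    using Suc by (intro norm_triangle_le add_mono) (simp_all add: norm_mult)
  also have "\<dots> \<le> (real n * norm (s - 1)) * norm (s - 1) + of_nat n ^ 2 * norm (s - 1) ^ 2"
    using assms by (intro add_mono mult_right_mono norm_power_diff) auto
  also have "\<dots> \<le> of_nat (Suc n) ^ 2 * norm (s - 1) ^ 2"
    by (simp add: power2_eq_square algebra_simps)
  finally show ?case .
qed simp

lemma norm_levy_integrand_le:
  assumes "s \<in> circleT"
  shows "norm (levy_integrand n s) \<le> (2 * real n ^ 2 + real n) * (1 - Re s)"
proof -
  have s: "norm s = 1"
    using assms by (simp add: circleT_def)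
  have "Re s ^ 2 + Im s ^ 2 = 1"
    using s by (simp add: cmod_power2[symmetric])
  moreover have "norm (s - 1) ^ 2 = Re s ^ 2 - 2 * Re s + 1 + Im s ^ 2"
    by (simp add: cmod_power2 power2_diff)
  ultimately have sq: "norm (s - 1) ^ 2 = 2 * (1 - Re s)"
    by (smt (verit))
  have "levy_integrand n s = (s ^ n - 1 - of_nat n * (s - 1)) - of_real (real n * (1 - Re s))"
    by (simp add: levy_integrand_def complex_eq_iff algebra_simps)
  also have "norm \<dots> \<le> norm (s ^ n - 1 - of_nat n * (s - 1))
      + norm (of_real (real n * (1 - Re s)) :: complex)"
    by (rule norm_triangle_ineq4)
  also have "norm (of_real (real n * (1 - Re s)) :: complex) = real n * (1 - Re s)"
    using circleT_Re_le_1[OF assms] by (simp only: norm_of_real) (simp add: abs_mult)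
  also have "norm (s ^ n - 1 - of_nat n * (s - 1)) \<le> real n ^ 2 * norm (s - 1) ^ 2"
    using norm_power_sub_one_le[OF s, of n] by simp
  finally show ?thesis
    by (simp add: sq algebra_simps)
qed

lemma integrable_levy_integrand:
  assumes "levy_measure \<rho>"
  shows "integrable \<rho> (levy_integrand n)"
proof (rule Bochner_Integration.integrable_bound)
  have sets: "sets \<rho> = sets borelT"
    using assms by (simp add: levy_measure_def)
  show "integrable \<rho> (\<lambda>s. (2 * real n ^ 2 + real n) * (1 - Re s))"
    using assms by (simp add: levy_measure_def)
  show "levy_integrand n \<in> borel_measurable \<rho>"
    using sets by (rule borel_measurable_borelT) simp
  show "AE s in \<rho>. norm (levy_integrand n s) \<le> norm ((2 * real n ^ 2 + real n) * (1 - Re s))"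
  proof (rule AE_I2)
    fix s assume "s \<in> space \<rho>"
    then have "s \<in> circleT"
      using space_eq_circleT[OF sets] by simp
    then show "norm (levy_integrand n s) \<le> norm ((2 * real n ^ 2 + real n) * (1 - Re s))"
      using norm_levy_integrand_le[of s n] circleT_Re_le_1[of s] by simp
  qed
qed

lemma Re_integral_levy_integrand_eq:
  assumes "levy_coeff \<rho>' (int n) = levy_coeff \<rho> (int n)"
  shows "Re (integral\<^sup>L \<rho>' (levy_integrand n)) = Re (integral\<^sup>L \<rho> (levy_integrand n))"
  using arg_cong[OF assms, of norm] by (simp add: levy_coeff_of_nat)

lemma emeasure_singleton_levy_less_top:
  assumes "levy_measure \<rho>" "a \<in> circleT" "a \<noteq> 1"
  shows "emeasure \<rho> {a} < \<infinity>"
proof -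
  have sets: "sets \<rho> = sets borelT"
    using assms(1) by (simp add: levy_measure_def)
  have pos: "1 - Re a > 0"
    using circleT_Re_le_1 circleT_Re_eq_1_iff assms(2,3) by force
  have "ennreal (1 - Re a) * emeasure \<rho> {a} = (\<integral>\<^sup>+s. ennreal (1 - Re a) * indicator {a} s \<partial>\<rho>)"
    using singleton_in_borelT[OF assms(2)] sets by (simp add: nn_integral_cmult_indicator)
  also have "\<dots> \<le> (\<integral>\<^sup>+s. ennreal (1 - Re s) \<partial>\<rho>)"
    by (intro nn_integral_mono) (auto simp: indicator_def)
  also have "\<dots> < \<infinity>"
    using assms(1) unfolding levy_measure_def
    by (auto dest!: integrableD(2) simp: top.not_eq_extremum)
  finally show ?thesis
    using pos by (auto simp: ennreal_mult_less_top)
qed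

section \<open>Polynomials in the real part\<close>

text \<open>For \<open>s = e\<^sup>i\<^sup>\<theta>\<close> we have \<open>Re (s\<^sup>n) = cos (n \<theta>)\<close>: these are the real cosine
  polynomials, as functions on the circle.\<close>

inductive_set cos_polys :: "(complex \<Rightarrow> real) set" where
  Re_power: "(\<lambda>s. Re (s ^ n)) \<in> cos_polys"
| add: "f \<in> cos_polys \<Longrightarrow> g \<in> cos_polys \<Longrightarrow> (\<lambda>s. f s + g s) \<in> cos_polys"
| cmult: "f \<in> cos_polys \<Longrightarrow> (\<lambda>s. a * f s) \<in> cos_polys"
| cong: "f \<in> cos_polys \<Longrightarrow> (\<And>s. s \<in> circleT \<Longrightarrow> g s = f s) \<Longrightarrow> g \<in> cos_polys"

lemma cos_polys_const: "(\<lambda>s. a) \<in> cos_polys"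
  using cos_polys.cmult[OF cos_polys.Re_power[of 0], of a] by simp

lemma cos_polys_Re_mult_Re_power: "(\<lambda>s. Re s * Re (s ^ n)) \<in> cos_polys"
proof (cases n)
  case 0
  then show ?thesis
    using cos_polys.Re_power[of 1] by simp
next
  case (Suc k)
  have "(\<lambda>s. (1/2) * Re (s ^ (k + 2)) + (1/2) * Re (s ^ k)) \<in> cos_polys"
    by (intro cos_polys.add cos_polys.cmult cos_polys.Re_power)
  then show ?thesis
  proof (rule cos_polys.cong)
    fix s assume "s \<in> circleT"
    then have "cnj s * s = 1"
      using complex_norm_square[of s] by (simp add: circleT_def mult.commute)
    then have "cnj s * s ^ n = s ^ k"
      using Suc by (simp add: mult.assoc[symmetric])
    moreover have "s * s ^ n = s ^ (k + 2)"
      using Suc by simp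
    moreover have "Re s * Re z = 1 / 2 * Re (s * z) + 1 / 2 * Re (cnj s * z)" for z
      by (simp add: algebra_simps)
    ultimately show "Re s * Re (s ^ n) = 1 / 2 * Re (s ^ (k + 2)) + 1 / 2 * Re (s ^ k)"
      by metis
  qed
qed

lemma cos_polys_Re_mult: "f \<in> cos_polys \<Longrightarrow> (\<lambda>s. Re s * f s) \<in> cos_polys"
proof (induction rule: cos_polys.induct)
  case (Re_power n)
  show ?case by (rule cos_polys_Re_mult_Re_power)
next
  case (add f g)
  then show ?case
    using cos_polys.add[OF add.IH] by (simp add: distrib_left)
next
  case (cmult f a)
  then show ?case
    using cos_polys.cmult[OF cmult.IH, of a] by (simp add: mult.left_commute)
next
  case (cong f g)
  then show ?case
    by (intro cos_polys.cong[OF cong.IH]) simp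
qed

lemma poly_Re_in_cos_polys: "(\<lambda>s. poly p (Re s)) \<in> cos_polys"
proof (induction p)
  case (pCons a p)
  then show ?case
    by (simp add: cos_polys.add cos_polys_const cos_polys_Re_mult)
qed (simp add: cos_polys_const)

lemma levy_integral_cos_polys_eq:
  assumes "f \<in> cos_polys" "levy_measure \<rho>" "levy_measure \<rho>'"
    and "\<And>n. Re (integral\<^sup>L \<rho>' (levy_integrand n)) = Re (integral\<^sup>L \<rho> (levy_integrand n))"
  shows "integrable \<rho> (\<lambda>s. f s - f 1) \<and> integrable \<rho>' (\<lambda>s. f s - f 1)
    \<and> integral\<^sup>L \<rho>' (\<lambda>s. f s - f 1) = integral\<^sup>L \<rho> (\<lambda>s. f s - f 1)"
  using assms(1)
proof induction
  case (Re_power n)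
  have "(\<lambda>s. Re (s ^ n) - Re (1 ^ n)) = (\<lambda>s. Re (levy_integrand n s))"
    by (simp add: levy_integrand_def fun_eq_iff)
  then show ?case
    using integrable_levy_integrand[OF assms(2)] integrable_levy_integrand[OF assms(3)] assms(4)
    by simp
next
  case (add f g)
  have "(\<lambda>s. (f s + g s) - (f 1 + g 1)) = (\<lambda>s. (f s - f 1) + (g s - g 1))"
    by (simp add: fun_eq_iff)
  then show ?case
    using add.IH by simp
next
  case (cmult f a)
  have "(\<lambda>s. a * f s - a * f 1) = (\<lambda>s. a * (f s - f 1))"
    by (simp add: fun_eq_iff right_diff_distrib)
  then show ?case
    using cmult.IH by simp
next
  case (cong f g)
  have one: "1 \<in> circleT"
    by (simp add: circleT_def)
  have "space \<rho> = circleT" "space \<rho>' = circleT"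
    using assms(2,3) by (simp_all add: levy_measure_def space_eq_circleT)
  then have "integrable \<rho> (\<lambda>s. g s - g 1) = integrable \<rho> (\<lambda>s. f s - f 1)"
    "integrable \<rho>' (\<lambda>s. g s - g 1) = integrable \<rho>' (\<lambda>s. f s - f 1)"
    "integral\<^sup>L \<rho> (\<lambda>s. g s - g 1) = integral\<^sup>L \<rho> (\<lambda>s. f s - f 1)"
    "integral\<^sup>L \<rho>' (\<lambda>s. g s - g 1) = integral\<^sup>L \<rho>' (\<lambda>s. f s - f 1)"
    using cong.hyps(2) one
    by (auto intro!: Bochner_Integration.integrable_cong Bochner_Integration.integral_cong)
  then show ?case
    using cong.IH by simp
qed

text \<open>Integrate \<open>(1 - Re s) p(Re s)\<^sup>2\<close>, a polynomial in \<open>Re s\<close> that vanishes at \<open>s = 1\<close>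
  and is nonnegative on the circle.\<close>

lemma levy_AE_poly_Re_eq_0:
  assumes "levy_measure \<rho>" "levy_measure \<rho>'" "\<And>n. levy_coeff \<rho>' n = levy_coeff \<rho> n"
    and "AE s in \<rho>. poly p (Re s) = 0"
  shows "AE s in \<rho>'. poly p (Re s) = 0"
proof -
  define q where "q s = (1 - Re s) * poly p (Re s) ^ 2" for s :: complex
  have "(\<lambda>s. poly ([:1, -1:] * p ^ 2) (Re s)) \<in> cos_polys"
    by (rule poly_Re_in_cos_polys)
  then have "q \<in> cos_polys"
    by (rule cos_polys.cong) (simp add: q_def algebra_simps)
  moreover have "q 1 = 0"
    by (simp add: q_def)
  ultimately have q: "integrable \<rho>' q" "integral\<^sup>L \<rho>' q = integral\<^sup>L \<rho> q"
    using levy_integral_cos_polys_eq[OF \<open>q \<in> cos_polys\<close> assms(1,2)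
        Re_integral_levy_integrand_eq[OF assms(3)]]
    by simp_all
  have "integral\<^sup>L \<rho> q = 0"
    using assms(4) by (intro integral_eq_zero_AE) (auto simp: q_def)
  have sets: "sets \<rho>' = sets borelT"
    using assms(2) by (simp add: levy_measure_def)
  have "AE s in \<rho>'. 0 \<le> q s"
    using space_eq_circleT[OF sets] circleT_Re_le_1 by (auto simp: q_def intro!: AE_I2)
  then have "AE s in \<rho>'. q s = 0"
    using integral_nonneg_eq_0_iff_AE[OF q(1)] q(2) \<open>integral\<^sup>L \<rho> q = 0\<close> by simp
  moreover have "AE s in \<rho>'. s \<noteq> 1"
    using assms(2) singleton_in_borelT[of 1] sets
    by (intro AE_I'[of "{1}"]) (auto simp: levy_measure_def circleT_def)
  ultimately show ?thesis
    using AE_space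
  proof eventually_elim
    case (elim s)
    then have "Re s \<noteq> 1"
      using circleT_Re_eq_1_iff space_eq_circleT[OF sets] by auto
    then show ?case
      using elim(1) by (simp add: q_def)
  qed
qed

lemma levy_AE_Re_in_finite:
  assumes "levy_measure \<rho>" "levy_measure \<rho>'" "\<And>n. levy_coeff \<rho>' n = levy_coeff \<rho> n"
    and "finite X" "AE s in \<rho>. Re s \<in> X"
  shows "AE s in \<rho>'. Re s \<in> X"
proof -
  define p where "p = (\<Prod>x\<in>X. [:- x, 1:])"
  have p: "poly p r = 0 \<longleftrightarrow> r \<in> X" for r
    using assms(4) by (simp add: p_def poly_prod)
  have "AE s in \<rho>'. poly p (Re s) = 0"
    using assms(5) by (intro levy_AE_poly_Re_eq_0[OF assms(1-3)]) (simp add: p)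
  then show ?thesis
    by (simp add: p)
qed

section \<open>Linear recurrences\<close>

definition poly_shift :: "'a::comm_semiring_1 poly \<Rightarrow> (nat \<Rightarrow> 'a) \<Rightarrow> nat \<Rightarrow> 'a" where
  "poly_shift q h n = (\<Sum>i\<le>degree q. coeff q i * h (n + i))"

lemma poly_shift_conv_sum: "degree q \<le> N \<Longrightarrow> poly_shift q h n = (\<Sum>i\<le>N. coeff q i * h (n + i))"
  unfolding poly_shift_def by (rule sum.mono_neutral_left) (auto simp: coeff_eq_0)

lemma poly_shift_0 [simp]: "poly_shift 0 h n = 0"
  by (simp add: poly_shift_def)

lemma poly_shift_add: "poly_shift (p + q) h n = poly_shift p h n + poly_shift q h n"
proof -
  define N where "N = max (degree p) (degree q)"
  have "degree (p + q) \<le> N" "degree p \<le> N" "degree q \<le> N"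
    by (auto simp: N_def degree_add_le)
  then show ?thesis
    by (simp add: poly_shift_conv_sum[of _ N] distrib_right sum.distrib)
qed

lemma poly_shift_smult: "poly_shift (smult c q) h n = c * poly_shift q h n"
  unfolding poly_shift_conv_sum[OF degree_smult_le]
  by (simp add: poly_shift_def sum_distrib_left mult.assoc)

lemma poly_shift_sum: "poly_shift (\<Sum>T\<in>S. f T) h n = (\<Sum>T\<in>S. poly_shift (f T) h n)"
  by (induction S rule: infinite_finite_induct) (simp_all add: poly_shift_add)

lemma poly_shift_monom: "poly_shift (monom c k) h n = c * h (n + k)"
proof -
  have "poly_shift (monom c k) h n = (\<Sum>i\<le>k. if i = k then c * h (n + k) else 0)"
    unfolding poly_shift_conv_sum[OF degree_monom_le] by (intro sum.cong) (auto simp: coeff_monom)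
  then show ?thesis
    by simp
qed

lemma poly_shift_cmult: "poly_shift q (\<lambda>n. c * h n) n = c * poly_shift q h n"
  by (simp add: poly_shift_def sum_distrib_left mult.left_commute)

lemma poly_shift_exp_sum:
  fixes w :: "'a::comm_semiring_1 \<Rightarrow> 'a"
  shows "poly_shift q (\<lambda>n. \<Sum>a\<in>F. w a * a ^ n) n = (\<Sum>a\<in>F. w a * poly q a * a ^ n)"
proof -
  have "poly_shift q (\<lambda>n. \<Sum>a\<in>F. w a * a ^ n) n
      = (\<Sum>i\<le>degree q. \<Sum>a\<in>F. coeff q i * (w a * a ^ (n + i)))"
    by (simp add: poly_shift_def sum_distrib_left)
  also have "\<dots> = (\<Sum>a\<in>F. \<Sum>i\<le>degree q. coeff q i * (w a * a ^ (n + i)))"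
    by (rule sum.swap)
  also have "\<dots> = (\<Sum>a\<in>F. w a * poly q a * a ^ n)"
    by (simp add: poly_altdef sum_distrib_left sum_distrib_right power_add mult_ac)
  finally show ?thesis .
qed

lemma poly_shift_Ints:
  fixes q :: "'a::comm_ring_1 poly"
  shows "(\<And>i. coeff q i \<in> \<int>) \<Longrightarrow> (\<And>n. h n \<in> \<int>) \<Longrightarrow> poly_shift q h n \<in> \<int>"
  unfolding poly_shift_def by (intro Ints_sum Ints_mult)

lemma coeff_mult_Ints:
  fixes p q :: "'a::comm_ring_1 poly"
  shows "(\<And>i. coeff p i \<in> \<int>) \<Longrightarrow> (\<And>i. coeff q i \<in> \<int>) \<Longrightarrow> coeff (p * q) i \<in> \<int>"
  unfolding coeff_mult by (intro Ints_sum Ints_mult)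

lemma coeff_power_Ints:
  fixes p :: "'a::comm_ring_1 poly"
  shows "(\<And>i. coeff p i \<in> \<int>) \<Longrightarrow> coeff (p ^ n) i \<in> \<int>"
  by (induction n arbitrary: i) (auto simp: coeff_1 intro: coeff_mult_Ints)

lemma exp_sum_eventually_zero:
  fixes w :: "'a::field \<Rightarrow> 'a"
  assumes "finite F" "0 \<notin> F" "\<And>n. n \<ge> n0 \<Longrightarrow> (\<Sum>b\<in>F. w b * b ^ n) = 0" "a \<in> F"
  shows "w a = 0"
proof -
  define R where "R = (\<Prod>b\<in>F - {a}. [:- b, 1:])"
  have R: "poly R b = 0 \<longleftrightarrow> b \<in> F - {a}" for b
    using assms(1) by (simp add: R_def poly_prod prod_zero_iff)
  have "w a * poly R a * a ^ n0 = (\<Sum>b\<in>F. w b * poly R b * b ^ n0)"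
    using assms(1,4) R by (simp add: sum.remove sum.neutral)
  also have "\<dots> = poly_shift R (\<lambda>n. \<Sum>b\<in>F. w b * b ^ n) n0"
    by (rule poly_shift_exp_sum[symmetric])
  also have "\<dots> = 0"
    using assms(3) by (simp add: poly_shift_def)
  finally show ?thesis
    using R[of a] assms(2,4) by auto
qed

section \<open>Algebraic independence\<close>

lemma alg_indep_rat_multilinear:
  assumes "alg_indep_rat m x" "(\<Sum>T\<in>Pow {1..m}. of_int (z T) * (\<Prod>k\<in>T. x k)) = 0" "T \<subseteq> {1..m}"
  shows "z T = 0"
proof -
  define A where "A = {1..m}"
  define ind where "ind U k = (if k \<in> U then 1 else 0 :: nat)" for U :: "nat set" and k :: nat
  define S where "S = ind ` Pow A"
  define a where "a e = (of_int (z {k \<in> A. 0 < e k}) :: rat)" for e :: "nat \<Rightarrow> nat"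
  have inj: "inj_on ind (Pow A)"
    by (rule inj_onI) (auto simp: ind_def fun_eq_iff split: if_splits)
  have ind_set: "{k \<in> A. 0 < ind U k} = U" if "U \<subseteq> A" for U
    using that by (auto simp: ind_def)
  have ind_prod: "(\<Prod>k\<in>A. x k ^ ind U k) = (\<Prod>k\<in>U. x k)" if "U \<subseteq> A" for U
  proof -
    have "(\<Prod>k\<in>A. x k ^ ind U k) = (\<Prod>k\<in>A. if k \<in> U then x k else 1)"
      by (intro prod.cong) (auto simp: ind_def)
    also have "\<dots> = (\<Prod>k\<in>U. x k)"
      using that by (simp add: prod.If_cases A_def Int_absorb1)
    finally show ?thesis .
  qed
  have "(\<Sum>e\<in>S. of_rat (a e) * (\<Prod>k\<in>A. x k ^ e k))
      = (\<Sum>U\<in>Pow A. of_rat (a (ind U)) * (\<Prod>k\<in>A. x k ^ ind U k))"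
    unfolding S_def by (rule sum.reindex[OF inj, unfolded comp_def])
  also have "\<dots> = (\<Sum>U\<in>Pow A. of_int (z U) * (\<Prod>k\<in>U. x k))"
    by (intro sum.cong refl) (simp add: a_def ind_set ind_prod of_rat_of_int_eq)
  finally have "(\<Sum>e\<in>S. of_rat (a e) * (\<Prod>k\<in>{1..m}. x k ^ e k)) = 0"
    using assms(2) by (simp add: A_def)
  moreover have "finite S" "\<forall>e\<in>S. \<forall>k. k \<notin> {1..m} \<longrightarrow> e k = 0"
    by (auto simp: S_def ind_def A_def)
  ultimately have "a (ind T) = 0"
    using assms(1,3) unfolding alg_indep_rat_def S_def A_def by blast
  moreover have "{k \<in> A. 0 < ind T k} = T"
    using assms(3) by (intro ind_set) (simp add: A_def)
  ultimately show ?thesis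
    by (simp add: a_def)
qed

text \<open>Expanding \<open>\<Prod>\<^sub>k (z\<^sup>2 + 1 - 2 x\<^sub>k z)\<close> multilinearly in the \<open>x\<^sub>k\<close>, the coefficient of
  \<open>x\<^sub>1 \<cdots> x\<^sub>m\<close> is \<open>(-2 z)\<^sup>m\<close>; the recurrence applied to an integer sequence is an integer
  combination of squarefree monomials in the \<open>x\<^sub>k\<close>, so this coefficient must act trivially.\<close>

lemma alg_indep_poly_shift_Ints:
  fixes x :: "nat \<Rightarrow> real" and J :: "nat \<Rightarrow> int"
  assumes "alg_indep_rat m x"
    and "poly_shift (\<Prod>k\<in>{1..m}. [:1, - 2 * of_real (x k), 1:]) (\<lambda>n. of_int (J n) :: complex) n = 0"
  shows "J (n + m) = 0"
proof -
  define A where "A = {1..m}"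
  define J' where "J' = (\<lambda>n. of_int (J n) :: complex)"
  define q where "q T = ([:0, -2:] ^ card T * [:1, 0, 1:] ^ card (A - T) :: complex poly)" for T
  have "(\<Prod>k\<in>A. [:1, - 2 * of_real (x k), 1:] :: complex poly)
      = (\<Prod>k\<in>A. smult (of_real (x k)) [:0, -2:] + [:1, 0, 1:])"
    by (simp add: mult.commute)
  also have "\<dots> = (\<Sum>T\<in>Pow A. (\<Prod>k\<in>T. smult (of_real (x k)) [:0, -2:]) * (\<Prod>k\<in>A - T. [:1, 0, 1:]))"
    by (rule prod_add) (simp add: A_def)
  also have "\<dots> = (\<Sum>T\<in>Pow A. smult (\<Prod>k\<in>T. of_real (x k)) (q T))"
    by (simp only: q_def prod_smult prod_constant mult_smult_left)
  finally have expand: "(\<Prod>k\<in>A. [:1, - 2 * of_real (x k), 1:] :: complex poly)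
      = (\<Sum>T\<in>Pow A. smult (\<Prod>k\<in>T. of_real (x k)) (q T))" .
  have "\<forall>T. \<exists>i. poly_shift (q T) J' n = of_int i"
  proof
    fix T
    have "coeff [:0, -2 :: complex:] i \<in> \<int>" "coeff [:1, 0, 1 :: complex:] i \<in> \<int>" for i
      by (simp_all add: coeff_pCons split: nat.split)
    then have "poly_shift (q T) J' n \<in> \<int>"
      unfolding q_def J'_def by (intro poly_shift_Ints coeff_mult_Ints coeff_power_Ints) auto
    then show "\<exists>i. poly_shift (q T) J' n = of_int i"
      by (elim Ints_cases) auto
  qed
  then obtain z where z: "\<And>T. poly_shift (q T) J' n = of_int (z T)"
    by metis
  have "of_real (\<Sum>T\<in>Pow A. of_int (z T) * (\<Prod>k\<in>T. x k))
      = poly_shift (\<Prod>k\<in>A. [:1, - 2 * of_real (x k), 1:]) J' n"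
    unfolding expand poly_shift_sum poly_shift_smult z by (simp add: mult.commute)
  also have "\<dots> = 0"
    using assms(2) by (simp add: A_def J'_def)
  finally have "(\<Sum>T\<in>Pow A. of_int (z T) * (\<Prod>k\<in>T. x k)) = 0"
    by (simp only: of_real_eq_0_iff)
  then have "z A = 0"
    using alg_indep_rat_multilinear[OF assms(1), of z A] by (simp add: A_def)
  moreover have "q A = monom ((-2) ^ m) m"
  proof -
    have "[:0, -2:] = monom (-2 :: complex) 1"
      by (simp add: monom_Suc monom_0)
    then show ?thesis
      by (simp add: q_def A_def monom_power)
  qed
  ultimately show ?thesis
    using z[of A] by (simp add: poly_shift_monom J'_def)
qed

lemma alg_indep_exp_sum_Ints:
  fixes x :: "nat \<Rightarrow> real" and w :: "complex \<Rightarrow> complex" and J :: "nat \<Rightarrow> int"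
  assumes "alg_indep_rat m x" "finite F" "0 \<notin> F"
    and roots: "\<And>a. a \<in> F \<Longrightarrow> \<exists>k\<in>{1..m}. poly [:1, - 2 * of_real (x k), 1:] a = 0"
    and "c \<noteq> 0" "\<And>n. (\<Sum>a\<in>F. w a * a ^ n) = c * of_int (J n)" "a \<in> F"
  shows "w a = 0"
proof (rule exp_sum_eventually_zero[OF assms(2,3) _ assms(7)])
  define Q where "Q = (\<Prod>k\<in>{1..m}. [:1, - 2 * of_real (x k), 1:] :: complex poly)"
  have "poly Q a = 0" if "a \<in> F" for a
    using roots[OF that] by (auto simp: Q_def poly_prod prod_zero_iff)
  then have "c * poly_shift Q (\<lambda>n. of_int (J n)) n = 0" for n
    using assms(6)[symmetric] by (simp add: poly_shift_cmult[symmetric] poly_shift_exp_sum)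
  then have "J (n + m) = 0" for n
    using assms(1,5) by (intro alg_indep_poly_shift_Ints) (auto simp: Q_def)
  then show "(\<Sum>a\<in>F. w a * a ^ n) = 0" if "m \<le> n" for n
    using assms(6)[of n] that by (metis le_add_diff_inverse2 mult_zero_right of_int_0)
qed

section \<open>L\'evy measures with finite support\<close>

lemma has_bochner_integral_levy_finite_support:
  fixes f :: "complex \<Rightarrow> 'b::{banach, second_countable_topology}"
  assumes "levy_measure \<rho>" "finite F" "F \<subseteq> circleT - {1}" "AE s in \<rho>. s \<in> F"
    and "f \<in> borel_measurable borel"
  shows "has_bochner_integral \<rho> f (\<Sum>a\<in>F. measure \<rho> {a} *\<^sub>R f a)"
proof (rule has_bochner_integral_finite_support[OF assms(2,4)])
  have sets: "sets \<rho> = sets borelT"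
    using assms(1) by (simp add: levy_measure_def)
  show "{a} \<in> sets \<rho>" if "a \<in> F" for a
    using that assms(3) sets singleton_in_borelT by auto
  show "emeasure \<rho> {a} < \<infinity>" if "a \<in> F" for a
    using that assms(3) by (intro emeasure_singleton_levy_less_top[OF assms(1)]) auto
  show "f \<in> borel_measurable \<rho>"
    using sets assms(5) by (rule borel_measurable_borelT)
qed

text \<open>The second difference in \<open>n\<close> removes the term \<open>i n Im s\<close> of the L\'evy integrand.\<close>

lemma levy_coeff_eq_finite_support:
  assumes "levy_measure \<rho>" "levy_measure \<rho>'" "finite F" "F \<subseteq> circleT - {1}"
    and "AE s in \<rho>. s \<in> F" "AE s in \<rho>'. s \<in> F" "\<And>n. levy_coeff \<rho>' n = levy_coeff \<rho> n"
  obtains J :: "nat \<Rightarrow> int" where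
    "\<And>n. (\<Sum>a\<in>F. of_real (measure \<rho>' {a} - measure \<rho> {a}) * (a - 1) ^ 2 * a ^ n)
      = (2 * pi * \<i>) * of_int (J n)"
proof -
  define \<delta> where "\<delta> a = measure \<rho>' {a} - measure \<rho> {a}" for a
  define S where "S n = integral\<^sup>L \<rho>' (levy_integrand n) - integral\<^sup>L \<rho> (levy_integrand n)" for n
  have S: "S n = (\<Sum>a\<in>F. of_real (\<delta> a) * levy_integrand n a)" for n
  proof -
    have "integral\<^sup>L \<rho> (levy_integrand n) = (\<Sum>a\<in>F. measure \<rho> {a} *\<^sub>R levy_integrand n a)"
      "integral\<^sup>L \<rho>' (levy_integrand n) = (\<Sum>a\<in>F. measure \<rho>' {a} *\<^sub>R levy_integrand n a)"
      using
        has_bochner_integral_levy_finite_support[OF assms(1,3,4,5) borel_measurable_levy_integrand]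
        has_bochner_integral_levy_finite_support[OF assms(2,3,4,6) borel_measurable_levy_integrand]
      by (simp_all add: has_bochner_integral_integral_eq)
    then show ?thesis
      by (simp add: S_def \<delta>_def scaleR_conv_of_real sum_subtractf left_diff_distrib)
  qed
  have "\<exists>K::int. S n = of_int (2 * K) * pi * \<i>" for n
    using assms(7)[of "int n"] by (auto simp: S_def levy_coeff_of_nat exp_eq)
  then obtain K :: "nat \<Rightarrow> int" where K: "\<And>n. S n = of_int (2 * K n) * pi * \<i>"
    by metis
  show thesis
  proof (rule that[of "\<lambda>n. K (n + 2) - 2 * K (n + 1) + K n"])
    fix n
    have "(\<Sum>a\<in>F. of_real (\<delta> a) * (a - 1) ^ 2 * a ^ n) = (\<Sum>a\<in>F. of_real (\<delta> a) *
        (levy_integrand (n + 2) a - 2 * levy_integrand (n + 1) a + levy_integrand n a))"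
      unfolding levy_integrand_second_difference by (simp add: mult_ac)
    also have "\<dots> = S (n + 2) - 2 * S (n + 1) + S n"
      unfolding S by (simp add: sum_distrib_left sum_subtractf sum.distrib distrib_left
          right_diff_distrib mult.left_commute)
    also have "\<dots> = (2 * pi * \<i>) * of_int (K (n + 2) - 2 * K (n + 1) + K n)"
      unfolding K by (simp add: algebra_simps)
    finally show "(\<Sum>a\<in>F. of_real (measure \<rho>' {a} - measure \<rho> {a}) * (a - 1) ^ 2 * a ^ n)
      = (2 * pi * \<i>) * of_int (K (n + 2) - 2 * K (n + 1) + K n)"
      by (simp add: \<delta>_def)
  qed
qed

lemma levy_measure_eq_finite_support:
  assumes "levy_measure \<rho>" "levy_measure \<rho>'" "finite F" "F \<subseteq> circleT - {1}"
    and "AE s in \<rho>. s \<in> F" "AE s in \<rho>'. s \<in> F" "\<And>a. a \<in> F \<Longrightarrow> measure \<rho>' {a} = measure \<rho> {a}"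
  shows "\<rho>' = \<rho>"
proof (rule measure_eq_finite_support[OF _ assms(3,6,5)])
  have sets: "sets \<rho> = sets borelT" "sets \<rho>' = sets borelT"
    using assms(1,2) by (simp_all add: levy_measure_def)
  then show "sets \<rho>' = sets \<rho>"
    by simp
  show "{a} \<in> sets \<rho>'" if "a \<in> F" for a
    using that assms(4) sets singleton_in_borelT by auto
  show "emeasure \<rho>' {a} = emeasure \<rho> {a}" if "a \<in> F" for a
  proof -
    have a: "a \<in> circleT" "a \<noteq> 1"
      using that assms(4) by auto
    then have "emeasure \<rho> {a} \<noteq> \<infinity>" "emeasure \<rho>' {a} \<noteq> \<infinity>"
      using emeasure_singleton_levy_less_top[OF assms(1) a]
        emeasure_singleton_levy_less_top[OF assms(2) a]
      by auto
    then show ?thesis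
      using assms(7)[OF that] by (simp add: emeasure_eq_ennreal_measure)
  qed
qed

lemma levy_measure_eq_alg_indep_support:
  fixes x :: "nat \<Rightarrow> real"
  assumes "alg_indep_rat m x" "levy_measure \<rho>" "levy_measure \<rho>'" "finite F" "F \<subseteq> circleT - {1}"
    and "AE s in \<rho>. s \<in> F" "AE s in \<rho>'. s \<in> F" "\<And>n. levy_coeff \<rho>' n = levy_coeff \<rho> n"
    and "\<And>a. a \<in> F \<Longrightarrow> \<exists>k\<in>{1..m}. poly [:1, - 2 * of_real (x k), 1:] a = 0"
  shows "\<rho>' = \<rho>"
proof (rule levy_measure_eq_finite_support[OF assms(2-7)])
  obtain J where J: "\<And>n. (\<Sum>a\<in>F. of_real (measure \<rho>' {a} - measure \<rho> {a}) * (a - 1) ^ 2 * a ^ n)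
      = (2 * pi * \<i>) * of_int (J n)"
    using levy_coeff_eq_finite_support[OF assms(2-8)] by blast
  fix a assume "a \<in> F"
  then have "of_real (measure \<rho>' {a} - measure \<rho> {a}) * (a - 1) ^ 2 = 0"
    using assms(5)
    by (intro alg_indep_exp_sum_Ints[OF assms(1,4) _ assms(9) _ J]) (auto simp: circleT_def)
  then show "measure \<rho>' {a} = measure \<rho> {a}"
    using assms(5) \<open>a \<in> F\<close> by auto
qed

section \<open>The discrete L\'evy measure\<close>

lemma sets_discrete_levy [simp]: "sets (discrete_levy m \<alpha> c d) = sets borelT"
proof -
  have "sets borelT \<subseteq> Pow circleT"
    using sets.space_closed[of borelT] by simp
  then show ?thesis
    unfolding discrete_levy_def using sets.sigma_sets_eq[of borelT] by (simp add: sets_measure_of)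
qed

lemma emeasure_discrete_levy:
  assumes "B \<in> sets borelT"
  shows "emeasure (discrete_levy m \<alpha> c d) B =
    (\<Sum>k\<in>{1..m}. ennreal (c k) * indicator B (\<alpha> k) + ennreal (d k) * indicator B (cnj (\<alpha> k)))"
  unfolding discrete_levy_def
proof (rule emeasure_measure_of_sigma[OF _ _ _ assms])
  show "sigma_algebra circleT (sets borelT)"
    using sets.sigma_algebra_axioms[of borelT] by simp
  show "positive (sets borelT)
      (\<lambda>A. \<Sum>k\<in>{1..m}. ennreal (c k) * indicator A (\<alpha> k) + ennreal (d k) * indicator A (cnj (\<alpha> k)))"
    by (simp add: positive_def)
  have "(\<Sum>i. ennreal r * indicator (A i) z) = ennreal r * indicator (\<Union>i. A i) z"
    if "disjoint_family A" for r z and A :: "nat \<Rightarrow> complex set"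
    using that by (simp add: suminf_indicator)
  then show "countably_additive (sets borelT)
      (\<lambda>A. \<Sum>k\<in>{1..m}. ennreal (c k) * indicator A (\<alpha> k) + ennreal (d k) * indicator A (cnj (\<alpha> k)))"
    unfolding countably_additive_def
    by (simp add: suminf_sum[OF summableI] suminf_add[OF summableI summableI, symmetric])
qed

lemma AE_discrete_levy: "AE s in discrete_levy m \<alpha> c d. s \<in> \<alpha> ` {1..m} \<union> cnj ` \<alpha> ` {1..m}"
proof (rule AE_I')
  define F where "F = \<alpha> ` {1..m} \<union> cnj ` \<alpha> ` {1..m}"
  have "circleT \<inter> - F \<in> sets borelT"
    unfolding borelT_def sets_restrict_space
    by (rule imageI) (simp add: F_def open_Compl finite_imp_closed borel_open)
  then show "circleT - F \<in> null_sets (discrete_levy m \<alpha> c d)"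
    by (auto simp: null_sets_def emeasure_discrete_levy F_def Diff_eq intro!: sum.neutral)
qed (auto simp: space_eq_circleT)

lemma levy_measure_discrete_levy:
  assumes "\<And>k. k \<in> {1..m} \<Longrightarrow> \<alpha> k \<in> circleT \<and> \<alpha> k \<noteq> 1"
  shows "levy_measure (discrete_levy m \<alpha> c d)"
  unfolding levy_measure_def
proof (intro conjI)
  define \<rho> where "\<rho> = discrete_levy m \<alpha> c d"
  define F where "F = \<alpha> ` {1..m} \<union> cnj ` \<alpha> ` {1..m}"
  have F: "finite F" "F \<subseteq> circleT - {1}"
    using assms by (auto simp: F_def circleT_def)
  show "sets (discrete_levy m \<alpha> c d) = sets borelT"
    by simp
  show "emeasure (discrete_levy m \<alpha> c d) {1} = 0"
    using assms singleton_in_borelT[of 1]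
    by (auto simp: emeasure_discrete_levy circleT_def indicator_def intro!: sum.neutral)
  have "has_bochner_integral \<rho> (\<lambda>s. 1 - Re s) (\<Sum>a\<in>F. measure \<rho> {a} *\<^sub>R (1 - Re a))"
  proof (rule has_bochner_integral_finite_support[OF F(1)])
    show "AE s in \<rho>. s \<in> F"
      unfolding \<rho>_def F_def by (rule AE_discrete_levy)
    show "{a} \<in> sets \<rho>" "emeasure \<rho> {a} < \<infinity>" if "a \<in> F" for a
      using that F(2) singleton_in_borelT
      by (auto simp: \<rho>_def emeasure_discrete_levy ennreal_mult_less_top indicator_def)
  qed (rule borel_measurable_borelT; simp add: \<rho>_def)
  then show "integrable (discrete_levy m \<alpha> c d) (\<lambda>s. 1 - Re s)"
    unfolding \<rho>_def by (rule integrable.intros)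
qed

lemma poly_cos_quadratic_cis:
  assumes "z = cis t \<or> z = cnj (cis t)"
  shows "poly [:1, - 2 * of_real (cos t), 1:] z = 0"
  using assms sin_cos_squared_add[of t]
  by (auto simp: complex_eq_iff power2_eq_square algebra_simps)

theorem theorem8p8:
  fixes m :: nat and \<phi> c d :: "nat \<Rightarrow> real"
  assumes "\<And>k. k \<in> {1..m} \<Longrightarrow> 0 < \<phi> k \<and> \<phi> k < pi"
    and "\<And>k. k \<in> {1..m} \<Longrightarrow> c k \<ge> 0 \<and> d k \<ge> 0"
    and "alg_indep_rat m (\<lambda>k. cos (\<phi> k))"
  shows "L_unique (discrete_levy m (\<lambda>k. exp (\<i> * of_real (\<phi> k))) c d)"
proof -
  \<comment> \<open>The signs of \<open>c\<close> and \<open>d\<close> are irrelevant: \<open>discrete_levy\<close> only uses \<open>ennreal (c k)\<close>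
    and \<open>ennreal (d k)\<close>.\<close>
  define \<alpha> where "\<alpha> = (\<lambda>k. cis (\<phi> k))"
  define F where "F = \<alpha> ` {1..m} \<union> cnj ` \<alpha> ` {1..m}"
  define \<rho> where "\<rho> = discrete_levy m \<alpha> c d"
  have \<alpha>: "\<alpha> k \<in> circleT \<and> \<alpha> k \<noteq> 1" if "k \<in> {1..m}" for k
    using assms(1)[OF that] sin_gt_zero[of "\<phi> k"] by (auto simp: \<alpha>_def circleT_def complex_eq_iff)
  have F: "finite F" "F \<subseteq> circleT - {1}"
    using \<alpha> by (auto simp: F_def circleT_def)
  have F_Re: "s \<in> F \<longleftrightarrow> s \<in> circleT \<and> Re s \<in> (\<lambda>k. cos (\<phi> k)) ` {1..m}" for s
    using circleT_Re_eq_cos[of s] by (auto simp: F_def \<alpha>_def circleT_def)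
  have roots: "\<exists>k\<in>{1..m}. poly [:1, - 2 * of_real (cos (\<phi> k)), 1:] a = 0" if "a \<in> F" for a
    using that poly_cos_quadratic_cis unfolding F_def \<alpha>_def by blast
  have levy: "levy_measure \<rho>"
    unfolding \<rho>_def using \<alpha> by (rule levy_measure_discrete_levy)
  have AE: "AE s in \<rho>. s \<in> F"
    unfolding \<rho>_def F_def by (rule AE_discrete_levy)
  have "\<rho>' = \<rho>" if lev': "levy_measure \<rho>'" and coeff: "\<And>n. levy_coeff \<rho>' n = levy_coeff \<rho> n" for \<rho>'
  proof (rule levy_measure_eq_alg_indep_support[OF assms(3) levy lev' F AE _ coeff roots])
    have "AE s in \<rho>'. Re s \<in> (\<lambda>k. cos (\<phi> k)) ` {1..m}"
      using AE by (intro levy_AE_Re_in_finite[OF levy lev' coeff]) (auto simp: F_Re)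
    then show "AE s in \<rho>'. s \<in> F"
      using lev' by (auto simp: F_Re levy_measure_def space_eq_circleT elim: AE_mp intro!: AE_I2)
  qed
  moreover have "discrete_levy m (\<lambda>k. exp (\<i> * of_real (\<phi> k))) c d = \<rho>"
    by (simp add: \<rho>_def \<alpha>_def cis_conv_exp)
  ultimately show ?thesis
    unfolding L_unique_def by auto
qed

end
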